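(* Let $f:\mathbb{R}^d\to\mathbb{R}$ be twice differentiable with $f^*:=\sup_\theta f(\theta)$ and $f(\theta)<f^*$ for all $\theta$. Suppose (i) $f$ is $L_1$ non-uniform smooth and (ii) $f$ satisfies the reversed Łojasiewicz inequality $\|\nabla f(\theta)\|_2\le\nu[f^*-f(\theta)]$ for all $\theta$, with $\nu>0$. Then $\theta\mapsto\ln(f^*-f(\theta))$ is $L_1\nu$-smooth.
   Context: $f$ is $L_1$ non-uniform smooth: $|f(\theta)-f(\theta')-\langle\nabla f(\theta'),\theta-\theta'\rangle|\le\frac{L_1\|\nabla f(\theta')\|_2}{2}\|\theta-\theta'\|_2^2$ for all $\theta,\theta'$. A function $g$ is $M$-smooth if $\nabla^2 g(\theta)\preceq M I$ for all $\theta$ (equivalently, here, the one-sided quadratic upper bound $g(\theta')\le g(\theta)+\langle\nabla g(\theta),\theta'-\theta\rangle+\frac M2\|\theta'-\theta\|_2^2$). *)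

theory Defs
  imports "HOL-Analysis.Analysis"
begin

definition twice_diff_with_grad :: "('a::euclidean_space \<Rightarrow> real) \<Rightarrow> ('a \<Rightarrow> 'a) \<Rightarrow> bool" where
  "twice_diff_with_grad f G \<longleftrightarrow> (\<forall>x. GDERIV f x :> G x) \<and> (\<forall>x. G differentiable (at x))"

text \<open>M-smoothness: twice differentiable with Hessian \<preceq> M I, i.e. the quadratic
  form of the Hessian (derivative of the gradient) is bounded by M |v|^2.\<close>
definition M_smooth :: "real \<Rightarrow> ('a::euclidean_space \<Rightarrow> real) \<Rightarrow> bool" where
  "M_smooth M g \<longleftrightarrow> (\<exists>G. twice_diff_with_grad g G \<and>
      (\<forall>x v. (frechet_derivative G (at x) v) \<bullet> v \<le> M * (norm v)\<^sup>2))"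

definition nonuniform_smooth :: "real \<Rightarrow> ('a::euclidean_space \<Rightarrow> real) \<Rightarrow> ('a \<Rightarrow> 'a) \<Rightarrow> bool" where
  "nonuniform_smooth L1 f G \<longleftrightarrow> (\<forall>\<theta> \<theta>'.
      \<bar>f \<theta> - f \<theta>' - G \<theta>' \<bullet> (\<theta> - \<theta>')\<bar> \<le> L1 * norm (G \<theta>') / 2 * (norm (\<theta> - \<theta>'))\<^sup>2)"

end

theory Submission
  imports Defs
begin

text \<open>Write \<open>h = f\<^sup>* - f > 0\<close>. The gradient of \<open>ln h\<close> is \<open>-\<nabla>f / h\<close> and its Hessian is
  \<open>-\<nabla>\<^sup>2f / h - \<nabla>f \<nabla>f\<^sup>T / h\<^sup>2 \<preceq> -\<nabla>\<^sup>2f / h\<close>. Adding the non-uniform smoothness bound at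
  \<open>\<theta>\<close> and at \<open>\<theta> + t v\<close> and letting \<open>t \<rightarrow> 0\<close> gives \<open>\<nabla>\<^sup>2f \<succeq> -L\<^sub>1 \<parallel>\<nabla>f\<parallel> I\<close>, so the Hessian
  of \<open>ln h\<close> is at most \<open>L\<^sub>1 \<parallel>\<nabla>f\<parallel> / h \<le> L\<^sub>1 \<nu>\<close> by the reversed Lojasiewicz inequality.
  The last step needs \<open>L\<^sub>1 \<ge> 0\<close>, which holds because \<open>f\<close> is not constant.\<close>

lemma twice_diff_with_grad_gradient: "twice_diff_with_grad f G \<Longrightarrow> GDERIV f x :> G x"
  unfolding twice_diff_with_grad_def by blast

lemma twice_diff_with_grad_hessian:
  "twice_diff_with_grad f G \<Longrightarrow> (G has_derivative frechet_derivative G (at x)) (at x)"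
  unfolding twice_diff_with_grad_def using frechet_derivative_works by blast

lemma nonuniform_smooth_gradient_inner_ge:
  assumes "nonuniform_smooth L1 f G"
  shows "(G y - G x) \<bullet> (y - x) \<ge> - (L1 / 2 * (norm (G x) + norm (G y)) * (norm (y - x))\<^sup>2)"
proof -
  have fwd: "\<bar>f y - f x - G x \<bullet> (y - x)\<bar> \<le> L1 * norm (G x) / 2 * (norm (y - x))\<^sup>2"
    and bwd: "\<bar>f x - f y - G y \<bullet> (x - y)\<bar> \<le> L1 * norm (G y) / 2 * (norm (y - x))\<^sup>2"
    using assms norm_minus_commute[of x y] unfolding nonuniform_smooth_def by metis+
  have "(G y - G x) \<bullet> (y - x) = (f y - f x - G x \<bullet> (y - x)) + (f x - f y - G y \<bullet> (x - y))"
    by (simp add: inner_diff algebra_simps)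
  then show ?thesis
    using abs_le_D2[OF fwd] abs_le_D2[OF bwd] by (simp add: algebra_simps)
qed

lemma has_real_derivative_inner_along_line:
  assumes dG: "(G has_derivative DG) (at x)"
  shows "((\<lambda>t. G (x + t *\<^sub>R v) \<bullet> w) has_real_derivative DG v \<bullet> w) (at 0)"
proof -
  have line: "((\<lambda>t. x + t *\<^sub>R v) has_derivative (\<lambda>t. t *\<^sub>R v)) (at 0)"
    by (auto intro!: derivative_eq_intros)
  have "((\<lambda>t. G (x + t *\<^sub>R v)) has_derivative (\<lambda>t. DG (t *\<^sub>R v))) (at 0)"
    using diff_chain_at[OF line, of G DG] dG by (simp add: o_def)
  then show ?thesis
    using linear_scale[OF has_derivative_linear[OF dG]]
    by (auto simp: has_field_derivative_def algebra_simps intro!: derivative_eq_intros)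
qed

lemma nonuniform_smooth_hessian_ge:
  assumes nus: "nonuniform_smooth L1 f G"
    and dG: "(G has_derivative DG) (at x)"
  shows "DG v \<bullet> v \<ge> - (L1 * norm (G x) * (norm v)\<^sup>2)"
proof -
  define q where "q t = (G (x + t *\<^sub>R v) - G x) \<bullet> v / t" for t :: real
  define b where "b t = - (L1 / 2 * (norm (G x) + norm (G (x + t *\<^sub>R v))) * (norm v)\<^sup>2)"
    for t :: real
  have "((\<lambda>t. G (x + t *\<^sub>R v) \<bullet> v) has_real_derivative DG v \<bullet> v) (at 0)"
    by (rule has_real_derivative_inner_along_line[OF dG])
  then have "(q \<longlongrightarrow> DG v \<bullet> v) (at_right 0)"
    unfolding has_field_derivative_iff q_def
    by (auto intro: filterlim_mono simp: at_le inner_diff_left)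
  moreover have "(b \<longlongrightarrow> - (L1 * norm (G x) * (norm v)\<^sup>2)) (at_right 0)"
  proof -
    have "((\<lambda>t. G (x + t *\<^sub>R v)) \<longlongrightarrow> G x) (at_right 0)"
      by (rule isCont_tendsto_compose[OF has_derivative_continuous[OF dG]])
        (auto intro!: tendsto_eq_intros)
    then have "(b \<longlongrightarrow> - (L1 / 2 * (norm (G x) + norm (G x)) * (norm v)\<^sup>2)) (at_right 0)"
      unfolding b_def by (intro tendsto_intros)
    then show ?thesis by (simp add: algebra_simps)
  qed
  moreover have "\<forall>\<^sub>F t in at_right 0. b t \<le> q t"
    unfolding eventually_at_right_field
  proof (intro exI[of _ 1] conjI allI impI)
    fix t :: real
    assume t: "0 < t" and "t < 1"
    have "t * (t * b t) \<le> t * ((G (x + t *\<^sub>R v) - G x) \<bullet> v)"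
      using nonuniform_smooth_gradient_inner_ge[OF nus, of x "x + t *\<^sub>R v"] t
      by (simp add: b_def power_mult_distrib power2_eq_square algebra_simps)
    then have "t * b t \<le> (G (x + t *\<^sub>R v) - G x) \<bullet> v"
      using t by simp
    then show "b t \<le> q t"
      using t by (simp add: q_def pos_le_divide_eq mult.commute)
  qed simp
  ultimately show ?thesis
    by (intro tendsto_le[of "at_right 0" q _ b]) simp_all
qed

lemma nonuniform_smooth_nonneg:
  assumes nus: "nonuniform_smooth L1 f G" and "f a \<noteq> f b"
  shows "L1 \<ge> 0"
proof (rule ccontr)
  assume "\<not> L1 \<ge> 0"
  have bound: "\<bar>f a - f b - G b \<bullet> (a - b)\<bar> \<le> L1 * norm (G b) / 2 * (norm (a - b))\<^sup>2"
    using nus unfolding nonuniform_smooth_def by blast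
  then have "0 \<le> L1 * norm (G b) / 2 * (norm (a - b))\<^sup>2"
    by (rule order_trans[OF abs_ge_zero])
  moreover have "(norm (a - b))\<^sup>2 > 0"
    using \<open>f a \<noteq> f b\<close> by auto
  ultimately have "0 \<le> L1 * norm (G b)"
    using mult_neg_pos[of "L1 * norm (G b) / 2" "(norm (a - b))\<^sup>2"] by linarith
  with \<open>\<not> L1 \<ge> 0\<close> have "G b = 0"
    by (metis mult_neg_pos norm_le_zero_iff not_le)
  with bound \<open>f a \<noteq> f b\<close> show False
    by simp
qed

lemma ln_gap_gradient:
  assumes "GDERIV f x :> G x" and "f x < c"
  shows "GDERIV (\<lambda>y. ln (c - f y)) x :> - (inverse (c - f x) *\<^sub>R G x)"
proof -
  have "GDERIV (\<lambda>y. c - f y) x :> - G x"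
    using has_derivative_diff[OF has_derivative_const assms(1)[unfolded gderiv_def]]
    by (simp add: gderiv_def)
  moreover have "DERIV ln (c - f x) :> inverse (c - f x)"
    using assms(2) by (auto intro!: derivative_eq_intros simp: inverse_eq_divide)
  ultimately have "GDERIV (\<lambda>y. ln (c - f y)) x :> inverse (c - f x) *\<^sub>R (- G x)"
    by (rule GDERIV_DERIV_compose)
  then show ?thesis
    by simp
qed

lemma ln_gap_gradient_has_derivative:
  assumes "GDERIV f x :> G x" and "(G has_derivative DG) (at x)" and "f x < c"
  shows "((\<lambda>y. - (inverse (c - f y) *\<^sub>R G y)) has_derivative
      (\<lambda>v. - (inverse (c - f x) *\<^sub>R DG v + ((G x \<bullet> v) / (c - f x)\<^sup>2) *\<^sub>R G x))) (at x)"
  using assms unfolding gderiv_def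
  by (auto intro!: derivative_eq_intros simp: inner_commute power2_eq_square field_simps)

lemma twice_diff_with_grad_ln_gap:
  assumes "twice_diff_with_grad f G" and "\<forall>x. f x < c"
  shows "twice_diff_with_grad (\<lambda>x. ln (c - f x)) (\<lambda>x. - (inverse (c - f x) *\<^sub>R G x))"
  unfolding twice_diff_with_grad_def
proof (intro conjI allI)
  fix x
  note grad = twice_diff_with_grad_gradient[OF assms(1), of x]
    and hess = twice_diff_with_grad_hessian[OF assms(1), of x]
  show "GDERIV (\<lambda>x. ln (c - f x)) x :> - (inverse (c - f x) *\<^sub>R G x)"
    using ln_gap_gradient[of f x G c] grad assms(2) by blast
  show "(\<lambda>x. - (inverse (c - f x) *\<^sub>R G x)) differentiable (at x)"
    using ln_gap_gradient_has_derivative[of f x G _ c] grad hess assms(2)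
    by (blast intro: differentiableI)
qed

lemma ln_gap_hessian_le:
  assumes "GDERIV f x :> G x" and "(G has_derivative DG) (at x)" and "f x < c"
  shows "frechet_derivative (\<lambda>y. - (inverse (c - f y) *\<^sub>R G y)) (at x) v \<bullet> v
    \<le> - (DG v \<bullet> v) / (c - f x)"
proof -
  have "frechet_derivative (\<lambda>y. - (inverse (c - f y) *\<^sub>R G y)) (at x) v \<bullet> v
      = - (DG v \<bullet> v) / (c - f x) - ((G x \<bullet> v) / (c - f x))\<^sup>2"
    unfolding frechet_derivative_at[OF ln_gap_gradient_has_derivative[OF assms], symmetric]
    by (simp add: inner_add_left inner_diff_left power_divide divide_inverse power2_eq_square)
  then show ?thesis
    by simp
qed

lemma M_smooth_ln_gap:
  assumes twice: "twice_diff_with_grad f G"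
    and nus: "nonuniform_smooth L1 f G" and "L1 \<ge> 0"
    and gap: "\<forall>x. f x < c"
    and loj: "\<forall>x. norm (G x) \<le> \<nu> * (c - f x)"
  shows "M_smooth (L1 * \<nu>) (\<lambda>x. ln (c - f x))"
proof -
  have "frechet_derivative (\<lambda>y. - (inverse (c - f y) *\<^sub>R G y)) (at x) v \<bullet> v
      \<le> L1 * \<nu> * (norm v)\<^sup>2" for x v
  proof -
    note grad = twice_diff_with_grad_gradient[OF twice, of x]
      and hess = twice_diff_with_grad_hessian[OF twice, of x]
    have "frechet_derivative (\<lambda>y. - (inverse (c - f y) *\<^sub>R G y)) (at x) v \<bullet> v
        \<le> - (frechet_derivative G (at x) v \<bullet> v) / (c - f x)"
      using ln_gap_hessian_le[OF grad hess] gap by blast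
    also have "\<dots> \<le> L1 * norm (G x) * (norm v)\<^sup>2 / (c - f x)"
      using divide_right_mono[of "- (frechet_derivative G (at x) v \<bullet> v)"
          "L1 * norm (G x) * (norm v)\<^sup>2" "c - f x"]
        nonuniform_smooth_hessian_ge[OF nus hess, of v] gap
      by (simp add: less_imp_le)
    also have "\<dots> = L1 * (norm (G x) / (c - f x)) * (norm v)\<^sup>2"
      by simp
    also have "\<dots> \<le> L1 * \<nu> * (norm v)\<^sup>2"
    proof -
      have "norm (G x) / (c - f x) \<le> \<nu>"
        using loj gap by (simp add: pos_divide_le_eq)
      then show ?thesis
        using \<open>L1 \<ge> 0\<close> by (intro mult_right_mono mult_left_mono) simp_all
    qed
    finally show ?thesis .
  qed
  then show ?thesis
    using twice_diff_with_grad_ln_gap[OF twice gap] unfolding M_smooth_def by blast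
qed

theorem lemma1:
  fixes f :: "real^'d \<Rightarrow> real" and G :: "real^'d \<Rightarrow> real^'d" and L1 \<nu> :: real
  assumes twice: "twice_diff_with_grad f G"
    and bdd: "bdd_above (range f)"
    and below: "\<forall>\<theta>. f \<theta> < (SUP \<theta>. f \<theta>)"
    and nus: "nonuniform_smooth L1 f G"
    and nu_pos: "\<nu> > 0"
    and loj: "\<forall>\<theta>. norm (G \<theta>) \<le> \<nu> * ((SUP \<theta>. f \<theta>) - f \<theta>)"
  shows "M_smooth (L1 * \<nu>) (\<lambda>\<theta>. ln ((SUP \<theta>. f \<theta>) - f \<theta>))"
proof -
  obtain \<theta> where "f 0 < f \<theta>"
    using below bdd less_cSUP_iff[of UNIV f "f 0"] by auto
  then have "L1 \<ge> 0"
    using nonuniform_smooth_nonneg[OF nus] by (metis less_irrefl)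
  then show ?thesis
    using M_smooth_ln_gap[OF twice nus _ below loj] by blast
qed

end
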